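(* Let $G$ be a $2$-connected plane graph and let $B$ be a triangular-block of $G$ whose outer face is a hole. Let $C$ be the outer cycle of $B$ and let $P$ be a $C$-path in $B$. Then some edge of $P$ is contained in two facial triangles of $G$.
   Context: A facial triangle of a plane graph $G$ is a face of $G$ bounded by a triangle. Two facial triangles $F,F'$ are equivalent if there is a sequence $F=F_1,\dots,F_k=F'$ of facial triangles of $G$ such that $F_i$ and $F_{i+1}$ share an edge for each $i$. For an edge $e$ of $G$: if $e$ lies in no facial triangle, the triangular-block $B(e)$ is the two-vertex subgraph consisting of $e$ and its ends; otherwise $B(e)$ is the union of all facial triangles equivalent to some facial triangle containing $e$. The triangular-blocks of $G$ are the subgraphs $B(e)$, $e\in E(G)$, each regarded as a plane graph with the embedding inherited from $G$. A hole of a triangular-block $B$ is a face of $B$ that is not a face of $G$. For a subgraph $H$ of $G$, an $H$-path is a path in $G$ with both ends in $H$ that is internally disjoint from $H$. *)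

theory Defs
  imports "HOL-Analysis.Analysis"
begin

(* A plane graph: vertices are points of the complex plane, edges are 2-element
   vertex sets, and emb e is an arc drawing edge e. *)

definition drawing :: "(complex set \<Rightarrow> real \<Rightarrow> complex) \<Rightarrow> complex set \<Rightarrow> complex set set \<Rightarrow> complex set" where
  "drawing emb W F = W \<union> (\<Union>e\<in>F. path_image (emb e))"

definition plane_graph :: "complex set \<Rightarrow> complex set set \<Rightarrow> (complex set \<Rightarrow> real \<Rightarrow> complex) \<Rightarrow> bool" where
  "plane_graph V E emb \<longleftrightarrow> finite V
     \<and> (\<forall>e\<in>E. \<exists>u v. e = {u, v} \<and> u \<noteq> v \<and> u \<in> V \<and> v \<in> V)
     \<and> (\<forall>e\<in>E. arc (emb e) \<and> {pathstart (emb e), pathfinish (emb e)} = e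
               \<and> path_image (emb e) \<inter> V = e)
     \<and> (\<forall>e\<in>E. \<forall>e'\<in>E. e \<noteq> e' \<longrightarrow> path_image (emb e) \<inter> path_image (emb e') \<subseteq> e \<inter> e')"

definition faces :: "(complex set \<Rightarrow> real \<Rightarrow> complex) \<Rightarrow> complex set \<Rightarrow> complex set set \<Rightarrow> complex set set" where
  "faces emb W F = components (- drawing emb W F)"

definition connected_on :: "complex set \<Rightarrow> complex set set \<Rightarrow> bool" where
  "connected_on W E \<longleftrightarrow>
     (\<forall>u\<in>W. \<forall>v\<in>W. (\<lambda>x y. x \<in> W \<and> y \<in> W \<and> {x, y} \<in> E)\<^sup>*\<^sup>* u v)"

definition two_connected :: "complex set \<Rightarrow> complex set set \<Rightarrow> bool" where
  "two_connected V E \<longleftrightarrow> card V \<ge> 3 \<and> connected_on V E \<and> (\<forall>x\<in>V. connected_on (V - {x}) E)"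

definition facial_triangle :: "complex set \<Rightarrow> complex set set \<Rightarrow> (complex set \<Rightarrow> real \<Rightarrow> complex) \<Rightarrow> complex set \<Rightarrow> bool" where
  "facial_triangle V E emb f \<longleftrightarrow> f \<in> faces emb V E \<and>
     (\<exists>a b c. a \<noteq> b \<and> b \<noteq> c \<and> a \<noteq> c \<and> {a, b} \<in> E \<and> {b, c} \<in> E \<and> {a, c} \<in> E \<and>
        frontier f = drawing emb {a, b, c} {{a, b}, {b, c}, {a, c}})"

definition tri_edges :: "complex set set \<Rightarrow> (complex set \<Rightarrow> real \<Rightarrow> complex) \<Rightarrow> complex set \<Rightarrow> complex set set" where
  "tri_edges E emb f = {e \<in> E. path_image (emb e) \<subseteq> frontier f}"

definition ft_adj :: "complex set \<Rightarrow> complex set set \<Rightarrow> (complex set \<Rightarrow> real \<Rightarrow> complex) \<Rightarrow> complex set \<Rightarrow> complex set \<Rightarrow> bool" where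
  "ft_adj V E emb f f' \<longleftrightarrow> facial_triangle V E emb f \<and> facial_triangle V E emb f' \<and>
     tri_edges E emb f \<inter> tri_edges E emb f' \<noteq> {}"

definition block_edges :: "complex set \<Rightarrow> complex set set \<Rightarrow> (complex set \<Rightarrow> real \<Rightarrow> complex) \<Rightarrow> complex set \<Rightarrow> complex set set" where
  "block_edges V E emb e =
     (if \<not> (\<exists>f. facial_triangle V E emb f \<and> e \<in> tri_edges E emb f) then {e}
      else \<Union>{tri_edges E emb f' | f'. \<exists>f. facial_triangle V E emb f \<and> e \<in> tri_edges E emb f
                                          \<and> (ft_adj V E emb)\<^sup>*\<^sup>* f f'})"

definition triangular_block :: "complex set \<Rightarrow> complex set set \<Rightarrow> (complex set \<Rightarrow> real \<Rightarrow> complex) \<Rightarrow> complex set \<Rightarrow> complex set set \<Rightarrow> bool" where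
  "triangular_block V E emb VB EB \<longleftrightarrow>
     (\<exists>e\<in>E. EB = block_edges V E emb e \<and> VB = \<Union>EB)"

definition cyc_edges :: "complex list \<Rightarrow> complex set set" where
  "cyc_edges cs = {{cs ! i, cs ! ((i + 1) mod length cs)} | i. i < length cs}"

definition is_cycle :: "complex set set \<Rightarrow> complex list \<Rightarrow> bool" where
  "is_cycle E cs \<longleftrightarrow> length cs \<ge> 3 \<and> distinct cs \<and> cyc_edges cs \<subseteq> E"

definition path_edges :: "complex list \<Rightarrow> complex set set" where
  "path_edges ps = {{ps ! i, ps ! Suc i} | i. Suc i < length ps}"

definition is_path :: "complex set set \<Rightarrow> complex list \<Rightarrow> bool" where
  "is_path E ps \<longleftrightarrow> ps \<noteq> [] \<and> distinct ps \<and> path_edges ps \<subseteq> E"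

definition is_H_path :: "complex set set \<Rightarrow> complex set \<Rightarrow> complex set set \<Rightarrow> complex list \<Rightarrow> bool" where
  "is_H_path E W F ps \<longleftrightarrow> is_path E ps \<and> length ps \<ge> 2 \<and> hd ps \<in> W \<and> last ps \<in> W
     \<and> (\<forall>i. 0 < i \<and> i < length ps - 1 \<longrightarrow> ps ! i \<notin> W)
     \<and> path_edges ps \<inter> F = {}"

end

theory Submission
  imports Defs
begin

(* Split the outer cycle C of B at the ends a, b of P into two a-b paths C1, C2.  Together
   with P they form a theta graph, so by the theta-curve theorem the inside of C minus P
   splits into two open regions, one bounded by C1 and P, the other by C2 and P.  Every
   facial triangle of B is a face of G other than the hole, so it lies inside C, avoids P
   and hence lies in one of the two regions; the triangles on the edges of C1 lie in the
   first, those on the edges of C2 in the second.  The facial triangles of B are linked by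
   shared edges, so somewhere two adjacent triangles lie in different regions; an inner
   point of their common edge lies in the closure of both regions, hence on P, so that
   edge is an edge of P. *)

section \<open>Vertex lists as paths and cycles\<close>

lemma path_edges_conv_zip: "path_edges L = (\<lambda>(x, y). {x, y}) ` set (zip L (tl L))"
  unfolding path_edges_def set_zip by (force simp: nth_tl)

lemma path_edges_Cons2: "path_edges (u # v # L) = insert {u, v} (path_edges (v # L))"
  by (simp add: path_edges_conv_zip)

lemma path_edges_rev [simp]: "path_edges (rev L) = path_edges L"
proof -
  have *: "path_edges (rev M) \<subseteq> path_edges M" for M :: "complex list"
  proof
    fix x assume "x \<in> path_edges (rev M)"
    then obtain i where i: "x = {rev M ! i, rev M ! Suc i}" "Suc i < length M"
      by (auto simp: path_edges_def)
    define k where "k = length M - Suc (Suc i)"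
    have "x = {M ! k, M ! Suc k}" "Suc k < length M"
      using i by (auto simp: k_def rev_nth Suc_diff_Suc)
    then show "x \<in> path_edges M" by (auto simp: path_edges_def)
  qed
  show ?thesis using *[of L] *[of "rev L"] by auto
qed

lemma path_edges_singleton [simp]: "path_edges [u] = {}"
  by (auto simp: path_edges_def)

lemma path_edges_snoc: "L \<noteq> [] \<Longrightarrow> path_edges (L @ [v]) = insert {last L, v} (path_edges L)"
proof (induction L rule: induct_list012)
  case (3 x y zs)
  then show ?case by (simp add: path_edges_Cons2 insert_commute)
qed (auto simp: path_edges_Cons2)

lemma path_edge_subset_set: "e \<in> path_edges L \<Longrightarrow> e \<subseteq> set L"
  by (auto simp: path_edges_def)

lemma set_subset_Union_path_edges:
  assumes "2 \<le> length L"
  shows "set L \<subseteq> \<Union>(path_edges L)"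
proof
  fix x assume "x \<in> set L"
  then obtain i where i: "i < length L" "x = L ! i" by (auto simp: in_set_conv_nth)
  show "x \<in> \<Union>(path_edges L)"
  proof (cases "Suc i < length L")
    case True
    then show ?thesis using i by (auto simp: path_edges_def)
  next
    case False
    then have "{L ! (i - 1), L ! Suc (i - 1)} \<in> path_edges L" "Suc (i - 1) = i"
      using i assms unfolding path_edges_def by auto
    then show ?thesis using i by (metis UnionI insertCI)
  qed
qed

lemma path_edges_hd:
  assumes "distinct L" "{hd L, w} \<in> path_edges L"
  shows "w = L ! 1"
proof -
  obtain i where i: "{hd L, w} = {L ! i, L ! Suc i}" "Suc i < length L"
    using assms(2) by (auto simp: path_edges_def)
  have hd: "hd L = L ! 0" using i by (cases L) auto
  have "hd L \<noteq> L ! Suc i"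
    unfolding hd using i nth_eq_iff_index_eq[OF assms(1), of 0 "Suc i"] by force
  then have "hd L = L ! i" "w = L ! Suc i" using i by (auto simp: doubleton_eq_iff)
  moreover have "i < length L" using i by simp
  ultimately show ?thesis using hd nth_eq_iff_index_eq[OF assms(1), of 0 i] by force
qed

lemma path_edge_doubleton:
  assumes "distinct L" "e \<in> path_edges L"
  obtains u v where "u \<noteq> v" "e = {u, v}"
proof -
  obtain i where "e = {L ! i, L ! Suc i}" "Suc i < length L"
    using assms(2) by (auto simp: path_edges_def)
  moreover have "L ! i \<noteq> L ! Suc i"
    using calculation(2) nth_eq_iff_index_eq[OF assms(1), of i "Suc i"] by simp
  ultimately show ?thesis using that by blast
qed

lemma path_edges_disjoint:
  assumes "distinct L1" "distinct L2" "set L1 \<inter> set L2 = {a, b}"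
    and "hd L1 = a" "hd L2 = a" "L1 ! 1 \<noteq> L2 ! 1"
  shows "path_edges L1 \<inter> path_edges L2 = {}"
proof (rule ccontr)
  assume "path_edges L1 \<inter> path_edges L2 \<noteq> {}"
  then obtain e where e: "e \<in> path_edges L1" "e \<in> path_edges L2" by blast
  obtain u v where "u \<noteq> v" "e = {u, v}" using path_edge_doubleton[OF assms(1) e(1)] .
  moreover have "e \<subseteq> {a, b}"
    using assms(3) path_edge_subset_set[OF e(1)] path_edge_subset_set[OF e(2)] by blast
  ultimately have "e = {a, b}" by blast
  then show False
    using e path_edges_hd[OF assms(1), of b] path_edges_hd[OF assms(2), of b] assms(4-6) by simp
qed

lemma path_edges_take_drop:
  "path_edges (take (Suc j) M) \<union> path_edges (drop j M) = path_edges M"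
proof -
  have "zip (take (Suc j) M) (tl (take (Suc j) M)) = take j (zip M (tl M))"
    by (induction M arbitrary: j rule: induct_list012) (auto simp: take_Cons' split: nat.split)
  moreover have "zip (drop j M) (tl (drop j M)) = drop j (zip M (tl M))"
    by (simp add: drop_zip drop_tl)
  ultimately show ?thesis
    unfolding path_edges_conv_zip by (metis image_Un set_append append_take_drop_id)
qed

lemma cyc_edges_conv_path_edges:
  assumes "cs \<noteq> []"
  shows "cyc_edges cs = path_edges (cs @ [hd cs])"
proof -
  have nth: "(cs @ [hd cs]) ! Suc i = cs ! ((i + 1) mod length cs)" if "i < length cs" for i
  proof (cases "Suc i < length cs")
    case False
    then have "Suc i = length cs" using that by simp
    then show ?thesis using assms by (simp add: nth_append hd_conv_nth)
  qed (simp add: nth_append)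
  have "{cs ! i, cs ! ((i + 1) mod length cs)} = {(cs @ [hd cs]) ! i, (cs @ [hd cs]) ! Suc i}"
    if "i < length cs" for i
    using that nth by (simp add: nth_append)
  then show ?thesis
    unfolding cyc_edges_def path_edges_def by (intro Collect_cong ex_cong1) auto
qed

lemma cyc_edges_rotate1 [simp]: "cyc_edges (rotate1 cs) = cyc_edges cs"
proof (cases cs)
  case (Cons x xs)
  show ?thesis
  proof (cases xs)
    case (Cons y ys)
    have "cyc_edges (rotate1 cs) = path_edges ((y # ys @ [x]) @ [y])"
      using \<open>cs = x # xs\<close> Cons by (simp add: cyc_edges_conv_path_edges)
    also have "\<dots> = path_edges (x # y # ys @ [x])"
      by (subst path_edges_snoc) (auto simp: path_edges_Cons2 insert_commute)
    also have "\<dots> = cyc_edges cs"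
      using \<open>cs = x # xs\<close> Cons by (simp add: cyc_edges_conv_path_edges)
    finally show ?thesis .
  qed (simp add: \<open>cs = x # xs\<close>)
qed simp

lemma cyc_edges_rotate [simp]: "cyc_edges (rotate n cs) = cyc_edges cs"
  by (induction n) simp_all

lemma cycle_split_at_hd:
  assumes cs: "distinct cs" "3 \<le> length cs" and b: "b \<in> set cs" "b \<noteq> hd cs"
  obtains L1 L2 where "distinct L1" "distinct L2" "2 \<le> length L1" "2 \<le> length L2"
    "hd L1 = hd cs" "last L1 = b" "hd L2 = hd cs" "last L2 = b"
    "set L1 \<union> set L2 = set cs" "set L1 \<inter> set L2 = {hd cs, b}"
    "path_edges L1 \<union> path_edges L2 = cyc_edges cs" "path_edges L1 \<inter> path_edges L2 = {}"
proof -
  define a where "a = hd cs"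
  define n where "n = length cs"
  have cs_ne: "cs \<noteq> []" using cs(2) by auto
  have a_nth: "a = cs ! 0" using cs_ne by (simp add: a_def hd_conv_nth)
  obtain j where j: "j < n" "cs ! j = b" using b(1) by (auto simp: in_set_conv_nth n_def)
  have "j \<noteq> 0" using j b(2) a_nth a_def by (metis gr0I)
  define L1 where "L1 = take (Suc j) cs"
  define L2 where "L2 = a # rev (drop j cs)"
  have a_take: "a \<in> set (take j cs)"
    using nth_mem[of 0 "take j cs"] \<open>j \<noteq> 0\<close> j a_nth cs_ne by (simp add: n_def)
  have b_drop: "b \<in> set (drop j cs)"
    using nth_mem[of 0 "drop j cs"] j by (simp add: n_def)
  have take_drop: "set (take j cs) \<inter> set (drop j cs) = {}"
    using set_take_disj_set_drop_if_distinct[OF cs(1)] by simp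
  have set_L1: "set L1 = set (take j cs) \<union> {b}"
    using j by (simp add: L1_def n_def take_Suc_conv_app_nth)
  have set_L2: "set L2 = set (drop j cs) \<union> {a}" by (auto simp: L2_def)
  have dist: "distinct L1" "distinct L2"
    using cs(1) a_take take_drop by (auto simp: L1_def L2_def)
  have L2_1: "L2 ! 1 = cs ! (n - 1)"
  proof -
    have "L2 ! 1 = hd (rev (drop j cs))" using j by (simp add: L2_def n_def hd_conv_nth)
    also have "\<dots> = last cs" using j by (simp add: hd_rev n_def)
    finally show ?thesis using cs_ne by (simp add: last_conv_nth n_def)
  qed
  have ends: "hd L1 = a" "last L1 = b" "hd L2 = a" "last L2 = b"
    using j cs_ne by (cases cs, simp_all add: L1_def L2_def n_def a_def last_rev
        take_Suc_conv_app_nth hd_drop_conv_nth)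
  have edges: "path_edges L1 \<union> path_edges L2 = cyc_edges cs"
  proof -
    have "path_edges L2 = path_edges (drop j cs @ [a])"
      by (metis path_edges_rev rev.simps(2) rev_rev_ident L2_def)
    then show ?thesis
      using path_edges_take_drop[of j "cs @ [a]"] j
      by (simp add: L1_def cyc_edges_conv_path_edges[OF cs_ne] a_def n_def)
  qed
  have verts: "set L1 \<inter> set L2 = {a, b}"
    using set_L1 set_L2 take_drop a_take b_drop by blast
  have "cs ! 1 \<noteq> cs ! (n - 1)"
    using nth_eq_iff_index_eq[OF cs(1), of 1 "n - 1"] cs(2) by (simp add: n_def)
  then have "path_edges L1 \<inter> path_edges L2 = {}"
    using path_edges_disjoint[OF dist verts] ends L2_1 \<open>j \<noteq> 0\<close> by (simp add: L1_def)
  moreover have "set L1 \<union> set L2 = set cs"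
  proof -
    have "set cs = set (take j cs) \<union> set (drop j cs)" by (metis append_take_drop_id set_append)
    then show ?thesis using set_L1 set_L2 a_take b_drop by blast
  qed
  moreover have "2 \<le> length L1" "2 \<le> length L2"
    using j \<open>j \<noteq> 0\<close> by (auto simp: L1_def L2_def n_def)
  ultimately show ?thesis using that dist ends edges verts by (simp add: a_def)
qed

lemma cycle_split:
  assumes "distinct cs" "3 \<le> length cs" "a \<in> set cs" "b \<in> set cs" "a \<noteq> b"
  obtains L1 L2 where "distinct L1" "distinct L2" "2 \<le> length L1" "2 \<le> length L2"
    "hd L1 = a" "last L1 = b" "hd L2 = a" "last L2 = b"
    "set L1 \<union> set L2 = set cs" "set L1 \<inter> set L2 = {a, b}"
    "path_edges L1 \<union> path_edges L2 = cyc_edges cs" "path_edges L1 \<inter> path_edges L2 = {}"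
proof -
  obtain i where i: "i < length cs" "cs ! i = a" using assms(3) by (auto simp: in_set_conv_nth)
  have "cs \<noteq> []" using i by auto
  then have "hd (rotate i cs) = a" using i hd_rotate_conv_nth[of cs i] by simp
  moreover have "distinct (rotate i cs)" "3 \<le> length (rotate i cs)" "b \<in> set (rotate i cs)"
    using assms by simp_all
  ultimately show ?thesis
    using cycle_split_at_hd[of "rotate i cs" b] that assms(5) by (metis cyc_edges_rotate set_rotate)
qed

lemma is_cycle_two_edges:
  assumes "is_cycle F cs"
  obtains e e' where "e \<in> F" "e' \<in> F" "e \<noteq> e'"
proof
  have cs: "distinct cs" "3 \<le> length cs" "cyc_edges cs \<subseteq> F" using assms by (auto simp: is_cycle_def)
  have "{cs ! i, cs ! ((i + 1) mod length cs)} \<in> F" if "i < length cs" for i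
    using that cs(3) unfolding cyc_edges_def by blast
  moreover have "0 < length cs" "1 < length cs" "(0 + 1) mod length cs = 1" "(1 + 1) mod length cs = 2"
    using cs(2) by auto
  ultimately show "{cs ! 0, cs ! 1} \<in> F" "{cs ! 1, cs ! 2} \<in> F" by (metis one_add_one)+
  have "0 < length cs" "1 < length cs" "2 < length cs" using cs(2) by auto
  then have "cs ! 0 \<noteq> cs ! 1" "cs ! 0 \<noteq> cs ! 2"
    using nth_eq_iff_index_eq[OF cs(1), of 0 1] nth_eq_iff_index_eq[OF cs(1), of 0 2] by simp_all
  then show "{cs ! 0, cs ! 1} \<noteq> {cs ! 1, cs ! 2}" by (auto simp: doubleton_eq_iff)
qed

lemma distinct_hd_neq_last: "distinct L \<Longrightarrow> 2 \<le> length L \<Longrightarrow> hd L \<noteq> last L"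
  by (induction L rule: induct_list012) auto

lemma H_path_set_Int:
  assumes "is_H_path F W F' ps"
  shows "set ps \<inter> W = {hd ps, last ps}"
proof
  have ps: "2 \<le> length ps" "hd ps \<in> W" "last ps \<in> W"
    and inner: "\<And>i. 0 < i \<Longrightarrow> i < length ps - 1 \<Longrightarrow> ps ! i \<notin> W"
    using assms by (auto simp: is_H_path_def)
  then have "ps \<noteq> []" by auto
  then show "{hd ps, last ps} \<subseteq> set ps \<inter> W" using ps by auto
  show "set ps \<inter> W \<subseteq> {hd ps, last ps}"
  proof
    fix x assume x: "x \<in> set ps \<inter> W"
    then obtain i where i: "i < length ps" "ps ! i = x" by (auto simp: in_set_conv_nth)
    then have "i = 0 \<or> i = length ps - 1" using inner[of i] x by fastforce
    then show "x \<in> {hd ps, last ps}"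
      using i \<open>ps \<noteq> []\<close> by (auto simp: hd_conv_nth last_conv_nth)
  qed
qed

section \<open>Plane graphs and their drawings\<close>

lemma plane_graph_edgeD:
  assumes "plane_graph V E emb" "e \<in> E"
  shows "arc (emb e)" "{pathstart (emb e), pathfinish (emb e)} = e" "path_image (emb e) \<inter> V = e"
proof -
  have "\<forall>e\<in>E. arc (emb e) \<and> {pathstart (emb e), pathfinish (emb e)} = e \<and> path_image (emb e) \<inter> V = e"
    using assms(1) unfolding plane_graph_def by (elim conjE) assumption
  then show "arc (emb e)" "{pathstart (emb e), pathfinish (emb e)} = e" "path_image (emb e) \<inter> V = e"
    using assms(2) by auto
qed

lemma plane_graph_edge_subset: "plane_graph V E emb \<Longrightarrow> e \<in> E \<Longrightarrow> e \<subseteq> V"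
  using plane_graph_edgeD(3) by blast

lemma plane_graph_edge_subset_path_image:
  "plane_graph V E emb \<Longrightarrow> e \<in> E \<Longrightarrow> e \<subseteq> path_image (emb e)"
  using plane_graph_edgeD(3) by blast

lemma plane_graph_edges_Int:
  assumes "plane_graph V E emb" "e \<in> E" "e' \<in> E" "e \<noteq> e'"
  shows "path_image (emb e) \<inter> path_image (emb e') \<subseteq> e \<inter> e'"
proof -
  have "\<forall>e\<in>E. \<forall>e'\<in>E. e \<noteq> e' \<longrightarrow> path_image (emb e) \<inter> path_image (emb e') \<subseteq> e \<inter> e'"
    using assms(1) unfolding plane_graph_def by (elim conjE) assumption
  then show ?thesis using assms(2-4) by blast
qed

lemma plane_graph_finite_edges:
  assumes "plane_graph V E emb" shows "finite E"
proof -
  have "E \<subseteq> Pow V" using plane_graph_edge_subset[OF assms] by blast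
  moreover have "finite V" using assms by (simp add: plane_graph_def)
  ultimately show ?thesis using finite_subset by blast
qed

lemma arc_inner_point:
  assumes "arc g"
  obtains x where "x \<in> path_image g" "x \<noteq> pathstart g" "x \<noteq> pathfinish g"
proof
  have inj: "inj_on g {0..1}" using assms by (simp add: arc_def)
  show "g (1/2) \<noteq> pathstart g" "g (1/2) \<noteq> pathfinish g"
    using inj_onD[OF inj, of "1/2" 0] inj_onD[OF inj, of "1/2" 1]
    unfolding pathstart_def pathfinish_def by auto
qed (simp add: path_image_def)

lemma plane_graph_edge_inner_point:
  assumes "plane_graph V E emb" "e \<in> E"
  obtains x where "x \<in> path_image (emb e)" "x \<notin> V"
proof -
  obtain x where x: "x \<in> path_image (emb e)" "x \<noteq> pathstart (emb e)" "x \<noteq> pathfinish (emb e)"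
    using arc_inner_point[OF plane_graph_edgeD(1)[OF assms]] .
  then have "x \<notin> e" using plane_graph_edgeD(2)[OF assms] by blast
  then show ?thesis using that x(1) plane_graph_edgeD(3)[OF assms] by blast
qed

lemma drawing_mono: "W \<subseteq> W' \<Longrightarrow> F \<subseteq> F' \<Longrightarrow> drawing emb W F \<subseteq> drawing emb W' F'"
  unfolding drawing_def by blast

lemma drawing_Un: "drawing emb W F \<union> drawing emb W' F' = drawing emb (W \<union> W') (F \<union> F')"
  unfolding drawing_def by blast

lemma drawing_UN: "drawing emb (\<Union>i\<in>I. W i) (\<Union>i\<in>I. F i) = (\<Union>i\<in>I. drawing emb (W i) (F i))"
  unfolding drawing_def by blast

lemma drawing_edge: "plane_graph V E emb \<Longrightarrow> e \<in> E \<Longrightarrow> drawing emb e {e} = path_image (emb e)"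
  by (auto simp: drawing_def dest: plane_graph_edge_subset_path_image)

lemma closed_drawing:
  assumes "plane_graph V E emb" "W \<subseteq> V" "F \<subseteq> E"
  shows "closed (drawing emb W F)"
proof -
  have "finite W" using assms(1,2) finite_subset by (auto simp: plane_graph_def)
  moreover have "finite F" using plane_graph_finite_edges[OF assms(1)] assms(3) finite_subset by blast
  moreover have "closed (path_image (emb e))" if "e \<in> F" for e
    using plane_graph_edgeD(1)[OF assms(1)] assms(3) that
    by (meson arc_imp_path compact_imp_closed compact_path_image subsetD)
  ultimately show ?thesis unfolding drawing_def
    by (intro closed_Un finite_imp_closed closed_Union) auto
qed

lemma edge_in_drawing:
  assumes G: "plane_graph V E emb" and "W \<subseteq> V" "F \<subseteq> E" "e \<in> E"
    and x: "x \<in> path_image (emb e)" "x \<notin> V" "x \<in> drawing emb W F"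
  shows "e \<in> F"
proof -
  obtain e' where e': "e' \<in> F" "x \<in> path_image (emb e')"
    using assms(2) x(2,3) unfolding drawing_def by blast
  have "e' = e"
  proof (rule ccontr)
    assume "e' \<noteq> e"
    then have "x \<in> e'" using plane_graph_edges_Int[OF G, of e' e] e' x(1) assms(3,4) by blast
    then show False using plane_graph_edge_subset[OF G, of e'] e'(1) assms(3) x(2) by blast
  qed
  then show ?thesis using e'(1) by simp
qed

lemma vertex_in_drawing:
  assumes G: "plane_graph V E emb" and "F \<subseteq> E" "\<Union>F \<subseteq> W" "x \<in> V" "x \<in> drawing emb W F"
  shows "x \<in> W"
proof (rule ccontr)
  assume "x \<notin> W"
  then obtain e where "e \<in> F" "x \<in> path_image (emb e)" using assms(5) unfolding drawing_def by blast
  then have "x \<in> e" using plane_graph_edgeD(3)[OF G, of e] assms(2,4) by blast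
  then show False using \<open>e \<in> F\<close> \<open>x \<notin> W\<close> assms(3) by blast
qed

lemma drawing_Int:
  assumes G: "plane_graph V E emb" and "W \<subseteq> V" "W' \<subseteq> V" "F \<subseteq> E" "F' \<subseteq> E"
    and "\<Union>F \<subseteq> W" "\<Union>F' \<subseteq> W'"
  shows "drawing emb W F \<inter> drawing emb W' F' = drawing emb (W \<inter> W') (F \<inter> F')"
proof
  show "drawing emb W F \<inter> drawing emb W' F' \<subseteq> drawing emb (W \<inter> W') (F \<inter> F')"
  proof
    fix x assume "x \<in> drawing emb W F \<inter> drawing emb W' F'"
    then have x: "x \<in> drawing emb W F" "x \<in> drawing emb W' F'" by simp_all
    show "x \<in> drawing emb (W \<inter> W') (F \<inter> F')"
    proof (cases "x \<in> V")
      case True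
      then have "x \<in> W \<inter> W'" using vertex_in_drawing[OF G] x assms(4-7) by blast
      then show ?thesis by (simp add: drawing_def)
    next
      case False
      then obtain e where "e \<in> F" "x \<in> path_image (emb e)"
        using x(1) assms(2) unfolding drawing_def by blast
      moreover have "e \<in> F'" using edge_in_drawing[OF G assms(3,5)] calculation False x(2) assms(4)
        by blast
      ultimately show ?thesis unfolding drawing_def by blast
    qed
  qed
  show "drawing emb (W \<inter> W') (F \<inter> F') \<subseteq> drawing emb W F \<inter> drawing emb W' F'"
    by (simp add: drawing_mono)
qed

lemma vertex_path_set_subset:
  "plane_graph V E emb \<Longrightarrow> 2 \<le> length L \<Longrightarrow> path_edges L \<subseteq> E \<Longrightarrow> set L \<subseteq> V"
  using set_subset_Union_path_edges plane_graph_edge_subset by blast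

lemma drawing_Int_vertex_paths:
  assumes G: "plane_graph V E emb"
    and "2 \<le> length L" "path_edges L \<subseteq> E" "2 \<le> length L'" "path_edges L' \<subseteq> E"
  shows "drawing emb (set L) (path_edges L) \<inter> drawing emb (set L') (path_edges L')
    = drawing emb (set L \<inter> set L') (path_edges L \<inter> path_edges L')"
  using assms vertex_path_set_subset[OF G] path_edge_subset_set
  by (intro drawing_Int[OF G]) blast+

lemma
  assumes "plane_graph V E emb" "W \<subseteq> V" "F \<subseteq> E" "g \<in> faces emb W F"
  shows connected_face: "connected g" and face_nonempty: "g \<noteq> {}"
    and face_Int_drawing: "g \<inter> drawing emb W F = {}"
proof -
  have g: "g \<in> components (- drawing emb W F)" using assms(4) by (simp add: faces_def)
  show "connected g" "g \<noteq> {}" using in_components_connected[OF g] in_components_nonempty[OF g] .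
  show "g \<inter> drawing emb W F = {}" using in_components_subset[OF g] by blast
qed

lemma face_eq_if_meets_subgraph_face:
  assumes G: "plane_graph V E emb" and "W \<subseteq> V" "F \<subseteq> E"
    and g: "g \<in> faces emb V E" and h: "h \<in> faces emb W F"
    and "frontier g \<subseteq> drawing emb W F" "g \<inter> h \<noteq> {}"
  shows "g = h"
proof
  have "h \<inter> frontier g = {}" using face_Int_drawing[OF G assms(2,3) h] assms(6) by blast
  then show "h \<subseteq> g"
    using connected_Int_frontier[OF connected_face[OF G assms(2,3) h]] assms(7) by blast
  have "g \<subseteq> - drawing emb W F"
    using face_Int_drawing[OF G order_refl order_refl g] drawing_mono[OF assms(2,3)] by blast
  then show "g \<subseteq> h"
    using components_maximal[of h] h connected_face[OF G order_refl order_refl g] assms(7)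
    by (auto simp: faces_def)
qed

section \<open>Theta graphs\<close>

lemma plane_graph_edge_arc:
  assumes G: "plane_graph V E emb" and "{u, v} \<in> E" "u \<noteq> v"
  obtains g where "arc g" "pathstart g = u" "pathfinish g = v" "path_image g = path_image (emb {u, v})"
proof (cases "pathstart (emb {u, v}) = u")
  case True
  then have "pathfinish (emb {u, v}) = v"
    using plane_graph_edgeD(2)[OF G assms(2)] assms(3) by (auto simp: doubleton_eq_iff)
  then show ?thesis using that True plane_graph_edgeD(1)[OF G assms(2)] by blast
next
  case False
  then have "pathstart (emb {u, v}) = v" "pathfinish (emb {u, v}) = u"
    using plane_graph_edgeD(2)[OF G assms(2)] by (auto simp: doubleton_eq_iff)
  then show ?thesis
    using that[of "reversepath (emb {u, v})"] plane_graph_edgeD(1)[OF G assms(2)]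
    by (simp add: arc_reversepath)
qed

lemma vertex_path_arc:
  assumes G: "plane_graph V E emb"
  shows "distinct L \<Longrightarrow> 2 \<le> length L \<Longrightarrow> path_edges L \<subseteq> E \<Longrightarrow>
    \<exists>g. arc g \<and> pathstart g = hd L \<and> pathfinish g = last L
      \<and> path_image g = drawing emb (set L) (path_edges L)"
proof (induction L rule: induct_list012)
  case (3 u v r)
  have uv: "{u, v} \<in> E" "u \<noteq> v" using "3.prems" by (auto simp: path_edges_Cons2)
  obtain g0 where g0: "arc g0" "pathstart g0 = u" "pathfinish g0 = v"
      "path_image g0 = drawing emb {u, v} {{u, v}}"
    using plane_graph_edge_arc[OF G uv] drawing_edge[OF G uv(1)] by metis
  show ?case
  proof (cases r)
    case Nil
    then show ?thesis using g0 by (auto simp: path_edges_Cons2 insert_commute)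
  next
    case (Cons w r')
    have edges: "path_edges (v # r) \<subseteq> E" using "3.prems"(3) by (simp add: path_edges_Cons2)
    obtain g where g: "arc g" "pathstart g = v" "pathfinish g = last (v # r)"
        "path_image g = drawing emb (set (v # r)) (path_edges (v # r))"
      using "3.IH"(2) "3.prems"(1) edges Cons by auto
    have vr_V: "set (v # r) \<subseteq> V" using vertex_path_set_subset[OF G _ edges] Cons by simp
    have u_notin: "u \<notin> set (v # r)" using "3.prems"(1) by simp
    then have "{u, v} \<notin> path_edges (v # r)" using path_edge_subset_set by blast
    then have "{u, v} \<inter> set (v # r) = {v}" "{{u, v}} \<inter> path_edges (v # r) = {}"
      using u_notin by auto
    moreover have "path_image g0 \<inter> path_image g
        = drawing emb ({u, v} \<inter> set (v # r)) ({{u, v}} \<inter> path_edges (v # r))"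
      unfolding g0(4) g(4)
      using plane_graph_edge_subset[OF G uv(1)] path_edge_subset_set[of _ "v # r"] uv(1)
      by (intro drawing_Int[OF G _ vr_V _ edges]) auto
    ultimately have "path_image g0 \<inter> path_image g = {v}" by (simp add: drawing_def)
    then have "arc (g0 +++ g)" using arc_join[OF g0(1) g(1)] g0(3) g(2) by simp
    moreover have "path_image (g0 +++ g) = drawing emb (set (u # v # r)) (path_edges (u # v # r))"
      using g0 g drawing_Un[of emb "{u, v}" "{{u, v}}"] by (simp add: path_image_join path_edges_Cons2)
    ultimately show ?thesis using g0 g by auto
  qed
qed auto

lemma cycle_H_path_theta:
  assumes G: "plane_graph V E emb" and C: "is_cycle E cs"
    and P: "is_H_path E (set cs) (cyc_edges cs) ps"
  obtains c1 c2 c where "arc c1" "arc c2" "arc c"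
    "pathstart c1 = hd ps" "pathfinish c1 = last ps" "pathstart c2 = hd ps" "pathfinish c2 = last ps"
    "pathstart c = hd ps" "pathfinish c = last ps"
    "path_image c1 \<union> path_image c2 = drawing emb (set cs) (cyc_edges cs)"
    "path_image c = drawing emb (set ps) (path_edges ps)"
    "path_image c1 \<inter> path_image c2 = {hd ps, last ps}"
    "path_image c1 \<inter> path_image c = {hd ps, last ps}"
    "path_image c2 \<inter> path_image c = {hd ps, last ps}"
proof -
  define a b where "a = hd ps" and "b = last ps"
  have cs: "distinct cs" "3 \<le> length cs" "cyc_edges cs \<subseteq> E" using C by (auto simp: is_cycle_def)
  have ps: "distinct ps" "2 \<le> length ps" "path_edges ps \<subseteq> E"
      "path_edges ps \<inter> cyc_edges cs = {}"
    using P by (auto simp: is_H_path_def is_path_def)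
  have ps_cs: "set ps \<inter> set cs = {a, b}" using H_path_set_Int[OF P] by (simp add: a_def b_def)
  have "a \<noteq> b" using distinct_hd_neq_last[OF ps(1,2)] by (simp add: a_def b_def)
  then obtain L1 L2 where L: "distinct L1" "distinct L2" "2 \<le> length L1" "2 \<le> length L2"
      "hd L1 = a" "last L1 = b" "hd L2 = a" "last L2 = b"
      "set L1 \<union> set L2 = set cs" "set L1 \<inter> set L2 = {a, b}"
      "path_edges L1 \<union> path_edges L2 = cyc_edges cs" "path_edges L1 \<inter> path_edges L2 = {}"
    using cycle_split[OF cs(1,2)] ps_cs by blast
  have E: "path_edges L1 \<subseteq> E" "path_edges L2 \<subseteq> E" using L(11) cs(3) by auto
  obtain c1 c2 c where
      c1: "arc c1" "pathstart c1 = a" "pathfinish c1 = b"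
        "path_image c1 = drawing emb (set L1) (path_edges L1)" and
      c2: "arc c2" "pathstart c2 = a" "pathfinish c2 = b"
        "path_image c2 = drawing emb (set L2) (path_edges L2)" and
      c: "arc c" "pathstart c = a" "pathfinish c = b"
        "path_image c = drawing emb (set ps) (path_edges ps)"
    using vertex_path_arc[OF G] L(1-8) E ps(1-3) by (metis a_def b_def)
  have "path_image c1 \<union> path_image c2 = drawing emb (set cs) (cyc_edges cs)"
    using c1(4) c2(4) L(9,11) by (simp add: drawing_Un)
  moreover have "path_image c1 \<inter> path_image c2 = {a, b}"
    using drawing_Int_vertex_paths[OF G L(3) E(1) L(4) E(2)] c1(4) c2(4) L(10,12)
    by (simp add: drawing_def)
  moreover have "path_image c1 \<inter> path_image c = {a, b}" "path_image c2 \<inter> path_image c = {a, b}"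
  proof -
    have "L1 \<noteq> []" "L2 \<noteq> []" using L(3,4) by auto
    then have "a \<in> set L1" "b \<in> set L1" "a \<in> set L2" "b \<in> set L2"
      using L(5-8) hd_in_set last_in_set by metis+
    then have "set L1 \<inter> set ps = {a, b}" "set L2 \<inter> set ps = {a, b}"
      using L(9) ps_cs by blast+
    moreover have "path_edges L1 \<inter> path_edges ps = {}" "path_edges L2 \<inter> path_edges ps = {}"
      using L(11) ps(4) by blast+
    ultimately show "path_image c1 \<inter> path_image c = {a, b}" "path_image c2 \<inter> path_image c = {a, b}"
      using drawing_Int_vertex_paths[OF G _ _ ps(2,3)] L(3,4) E c1(4) c2(4) c(4)
      by (simp_all add: drawing_def)
  qed
  ultimately show ?thesis using that c1 c2 c by (simp add: a_def b_def)
qed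

lemma outside_frontier_subset:
  fixes S :: "'a::euclidean_space set"
  assumes "2 \<le> DIM('a)" "bounded (frontier S)" "\<not> bounded S"
  shows "outside (frontier S) \<subseteq> S"
proof -
  have "outside (frontier S) \<inter> S \<noteq> {}"
  proof
    assume "outside (frontier S) \<inter> S = {}"
    then have "S \<subseteq> inside (frontier S) \<union> frontier S"
      using inside_Un_outside[of "frontier S"] by blast
    moreover have "bounded (inside (frontier S) \<union> frontier S)"
      using bounded_inside[OF assms(2)] assms(2) by simp
    ultimately show False using assms(3) bounded_subset by blast
  qed
  then show ?thesis
    using connected_Int_frontier[OF connected_outside[OF assms(2,1)]] outside_no_overlap by blast
qed

lemma theta_curve_sides:
  fixes c1 c2 c :: "real \<Rightarrow> complex"
  assumes "arc c1" "arc c2" "arc c"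
    and "pathstart c1 = a" "pathfinish c1 = b" "pathstart c2 = a" "pathfinish c2 = b"
    and "pathstart c = a" "pathfinish c = b"
    and I12: "path_image c1 \<inter> path_image c2 = {a, b}"
    and "path_image c1 \<inter> path_image c = {a, b}" "path_image c2 \<inter> path_image c = {a, b}"
    and "path_image c \<inter> inside (path_image c1 \<union> path_image c2) \<noteq> {}"
  obtains S1 S2 where "open S1" "open S2" "S1 \<inter> S2 = {}"
    "S1 \<union> S2 = inside (path_image c1 \<union> path_image c2) - path_image c"
    "closure S1 \<inter> closure S2 \<subseteq> path_image c"
    "closure S1 \<inter> path_image c2 \<subseteq> path_image c" "closure S2 \<inter> path_image c1 \<subseteq> path_image c"
proof -
  define S1 where "S1 = inside (path_image c1 \<union> path_image c)"
  define S2 where "S2 = inside (path_image c2 \<union> path_image c)"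
  have "a \<noteq> b" using arc_distinct_ends[OF assms(1)] assms(4,5) by simp
  then have split: "S1 \<inter> S2 = {}" "S1 \<union> S2 \<union> (path_image c - {a, b}) = inside (path_image c1 \<union> path_image c2)"
    using split_inside_simple_closed_curve[of c1 a b c2 c] assms unfolding S1_def S2_def
    by (auto simp: arc_imp_simple_path)
  have closed: "closed (path_image c1 \<union> path_image c)" "closed (path_image c2 \<union> path_image c)"
    using assms(1-3) by (simp_all add: arc_imp_path closed_path_image closed_Un)
  have S_c: "S1 \<inter> path_image c = {}" "S2 \<inter> path_image c = {}"
    using inside_no_overlap[of "path_image c1 \<union> path_image c"]
      inside_no_overlap[of "path_image c2 \<union> path_image c"]
    unfolding S1_def S2_def by blast+
  have "S1 \<subseteq> inside (path_image c1 \<union> path_image c2)" "S2 \<subseteq> inside (path_image c1 \<union> path_image c2)"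
    using split(2) by auto
  then have S_K: "S1 \<inter> (path_image c1 \<union> path_image c2) = {}"
      "S2 \<inter> (path_image c1 \<union> path_image c2) = {}"
    using inside_no_overlap[of "path_image c1 \<union> path_image c2"] by blast+
  have cl: "closure S1 \<subseteq> path_image c1 \<union> path_image c \<union> S1"
      "closure S2 \<subseteq> path_image c2 \<union> path_image c \<union> S2"
    using closure_inside_subset[OF closed(1)] closure_inside_subset[OF closed(2)]
    unfolding S1_def S2_def by (simp_all add: Un_commute)
  have ab: "{a, b} \<subseteq> path_image c" using assms(8,9) by auto
  show ?thesis
  proof
    show "open S1" "open S2" using open_inside[OF closed(1)] open_inside[OF closed(2)]
      by (simp_all add: S1_def S2_def)
    show "S1 \<inter> S2 = {}" by (fact split(1))
    show "S1 \<union> S2 = inside (path_image c1 \<union> path_image c2) - path_image c"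
      using split(2) S_c ab inside_no_overlap[of "path_image c1 \<union> path_image c2"] by auto
    show "closure S1 \<inter> closure S2 \<subseteq> path_image c"
    proof
      fix x assume x: "x \<in> closure S1 \<inter> closure S2"
      then have "x \<notin> S1" "x \<notin> S2" using cl S_c S_K split(1) by blast+
      then show "x \<in> path_image c" using x cl I12 ab by blast
    qed
    show "closure S1 \<inter> path_image c2 \<subseteq> path_image c" "closure S2 \<inter> path_image c1 \<subseteq> path_image c"
      using cl S_K I12 ab by blast+
  qed
qed

lemma face_subset_inside_hole:
  assumes G: "plane_graph V E emb" and "W \<subseteq> V" "F \<subseteq> E"
    and Out: "Out \<in> faces emb W F" "\<not> bounded Out" "Out \<notin> faces emb V E" "bounded (frontier Out)"
    and g: "g \<in> faces emb V E" "frontier g \<subseteq> drawing emb W F"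
  shows "g \<subseteq> inside (frontier Out)"
proof -
  have "g \<inter> Out = {}" using face_eq_if_meets_subgraph_face[OF G assms(2,3) g(1) Out(1) g(2)] Out(3) g(1)
    by blast
  moreover have "frontier Out \<subseteq> drawing emb W F"
    using frontier_of_components_closed_complement closed_drawing[OF G assms(2,3)] Out(1)
    by (auto simp: faces_def)
  moreover have "g \<inter> drawing emb W F = {}"
    using face_Int_drawing[OF G order_refl order_refl g(1)] drawing_mono[OF assms(2,3)] by blast
  moreover have "outside (frontier Out) \<subseteq> Out" by (rule outside_frontier_subset) (simp_all add: Out(2,4))
  ultimately show ?thesis using inside_Un_outside[of "frontier Out"] by blast
qed

lemma drawing_subset_inside_hole:
  assumes "Out \<in> faces emb W F" "\<not> bounded Out" "bounded (frontier Out)"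
  shows "drawing emb W F - frontier Out \<subseteq> inside (frontier Out)"
proof -
  have "Out \<inter> drawing emb W F = {}" using in_components_subset assms(1) by (fastforce simp: faces_def)
  moreover have "outside (frontier Out) \<subseteq> Out" by (rule outside_frontier_subset) (simp_all add: assms(2,3))
  ultimately show ?thesis using inside_Un_outside[of "frontier Out"] by blast
qed

section \<open>Triangular blocks\<close>

lemma facial_triangle_frontier:
  assumes G: "plane_graph V E emb" and "facial_triangle V E emb g"
  shows "frontier g = drawing emb (\<Union>(tri_edges E emb g)) (tri_edges E emb g)"
proof
  obtain a b c where abc: "{a, b} \<in> E" "{b, c} \<in> E" "{a, c} \<in> E"
      "frontier g = drawing emb {a, b, c} {{a, b}, {b, c}, {a, c}}"
    using assms(2) unfolding facial_triangle_def by blast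
  then have "{{a, b}, {b, c}, {a, c}} \<subseteq> tri_edges E emb g"
    unfolding tri_edges_def drawing_def by auto
  then show "frontier g \<subseteq> drawing emb (\<Union>(tri_edges E emb g)) (tri_edges E emb g)"
    unfolding abc(4) by (intro drawing_mono) auto
  show "drawing emb (\<Union>(tri_edges E emb g)) (tri_edges E emb g) \<subseteq> frontier g"
    using plane_graph_edge_subset_path_image[OF G] unfolding drawing_def tri_edges_def by blast
qed

definition block_triangle ::
    "complex set \<Rightarrow> complex set set \<Rightarrow> (complex set \<Rightarrow> real \<Rightarrow> complex) \<Rightarrow> complex set \<Rightarrow> complex set \<Rightarrow> bool"
  where "block_triangle V E emb e0 g \<longleftrightarrow>
    (\<exists>f. facial_triangle V E emb f \<and> e0 \<in> tri_edges E emb f \<and> (ft_adj V E emb)\<^sup>*\<^sup>* f g)"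

lemma symp_ft_adj: "symp (ft_adj V E emb)"
  unfolding ft_adj_def by (rule sympI) blast

lemma block_triangle_facial: "block_triangle V E emb e0 g \<Longrightarrow> facial_triangle V E emb g"
  unfolding block_triangle_def by (metis ft_adj_def rtranclp.cases)

lemma block_triangle_rtranclp:
  "block_triangle V E emb e0 g \<Longrightarrow> (ft_adj V E emb)\<^sup>*\<^sup>* g h \<Longrightarrow> block_triangle V E emb e0 h"
  unfolding block_triangle_def by (meson rtranclp_trans)

lemma block_triangles_linked:
  assumes "block_triangle V E emb e0 g" "block_triangle V E emb e0 h"
  shows "(ft_adj V E emb)\<^sup>*\<^sup>* g h"
proof -
  obtain f f' where f: "facial_triangle V E emb f" "e0 \<in> tri_edges E emb f" "(ft_adj V E emb)\<^sup>*\<^sup>* f g"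
    and f': "facial_triangle V E emb f'" "e0 \<in> tri_edges E emb f'" "(ft_adj V E emb)\<^sup>*\<^sup>* f' h"
    using assms unfolding block_triangle_def by blast
  have "(ft_adj V E emb)\<^sup>*\<^sup>* g f"
    using f(3) symp_rtranclp[OF symp_ft_adj] by (blast dest: sympD)
  moreover have "(ft_adj V E emb)\<^sup>*\<^sup>* f f'"
  proof (cases "f = f'")
    case False
    then have "ft_adj V E emb f f'" using f f' by (auto simp: ft_adj_def)
    then show ?thesis by simp
  qed simp
  ultimately show ?thesis using f'(3) by (meson rtranclp_trans)
qed

(* Two distinct edges exclude the two-vertex block of an edge lying in no facial triangle. *)
lemma triangular_block_triangles:
  assumes "triangular_block V E emb VB EB" "e \<in> EB" "e' \<in> EB" "e \<noteq> e'"
  obtains e0 where "EB = (\<Union>g\<in>Collect (block_triangle V E emb e0). tri_edges E emb g)" "VB = \<Union>EB"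
proof -
  obtain e0 where e0: "EB = block_edges V E emb e0" "VB = \<Union>EB"
    using assms(1) by (auto simp: triangular_block_def)
  moreover have "\<exists>f. facial_triangle V E emb f \<and> e0 \<in> tri_edges E emb f"
    using assms(2-4) e0(1) by (auto simp: block_edges_def split: if_splits)
  ultimately show ?thesis
    using that unfolding block_edges_def block_triangle_def by auto
qed

lemma drawing_triangular_block:
  assumes G: "plane_graph V E emb"
    and "EB = (\<Union>g\<in>Collect (block_triangle V E emb e0). tri_edges E emb g)" "VB = \<Union>EB"
  shows "drawing emb VB EB = (\<Union>g\<in>Collect (block_triangle V E emb e0). frontier g)"
proof -
  have "VB = (\<Union>g\<in>Collect (block_triangle V E emb e0). \<Union>(tri_edges E emb g))"
    using assms(2,3) by blast
  then have "drawing emb VB EB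
      = (\<Union>g\<in>Collect (block_triangle V E emb e0). drawing emb (\<Union>(tri_edges E emb g)) (tri_edges E emb g))"
    unfolding assms(2) by (simp only: drawing_UN)
  then show ?thesis
    using facial_triangle_frontier[OF G] block_triangle_facial by simp
qed

lemma block_triangle_inside_hole:
  assumes G: "plane_graph V E emb" and "VB \<subseteq> V" "EB \<subseteq> E"
    and B: "drawing emb VB EB = (\<Union>g\<in>Collect (block_triangle V E emb e0). frontier g)"
    and Out: "Out \<in> faces emb VB EB" "\<not> bounded Out" "Out \<notin> faces emb V E" "bounded (frontier Out)"
    and "block_triangle V E emb e0 g"
  shows "g \<subseteq> inside (frontier Out) - drawing emb VB EB"
proof -
  have g: "g \<in> faces emb V E" "frontier g \<subseteq> drawing emb VB EB"
    using block_triangle_facial[OF assms(9)] B assms(9) by (auto simp: facial_triangle_def)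
  then have "g \<subseteq> inside (frontier Out)"
    using face_subset_inside_hole[OF G assms(2,3) Out] by blast
  moreover have "g \<inter> drawing emb VB EB = {}"
    using face_Int_drawing[OF G order_refl order_refl g(1)] drawing_mono[OF assms(2,3)] by blast
  ultimately show ?thesis by blast
qed

lemma block_triangles_cross:
  assumes G: "plane_graph V E emb"
    and S: "open S1" "open S2" "S1 \<inter> S2 = {}"
    and sides: "\<And>g. block_triangle V E emb e0 g \<Longrightarrow> g \<subseteq> S1 \<union> S2"
    and g1: "block_triangle V E emb e0 g1" "x1 \<in> frontier g1" "x1 \<notin> closure S2"
    and g2: "block_triangle V E emb e0 g2" "x2 \<in> frontier g2" "x2 \<notin> closure S1"
  shows "\<exists>e f1 f2. f1 \<noteq> f2 \<and> facial_triangle V E emb f1 \<and> facial_triangle V E emb f2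
    \<and> e \<in> tri_edges E emb f1 \<and> e \<in> tri_edges E emb f2
    \<and> (\<exists>x \<in> path_image (emb e) - V. x \<in> closure S1 \<inter> closure S2)"
proof (rule ccontr)
  assume no_crossing: "\<not> ?thesis"
  have face: "g \<in> faces emb V E" if "block_triangle V E emb e0 g" for g
    using block_triangle_facial[OF that] by (simp add: facial_triangle_def)
  have one_side: "g \<subseteq> S1 \<or> g \<subseteq> S2" if "block_triangle V E emb e0 g" for g
    using connectedD[OF connected_face[OF G order_refl order_refl face[OF that]] S(1,2)]
      S(3) sides[OF that] by blast
  have in_closure: "x \<in> closure S" if "x \<in> frontier g" "g \<subseteq> S" for x g S
    using that closure_mono[OF that(2)] by (auto simp: frontier_def)
  have "g1 \<subseteq> S1" using one_side[OF g1(1)] in_closure g1(2,3) by blast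
  have "g2 \<subseteq> S2" using one_side[OF g2(1)] in_closure g2(2,3) by blast
  have "h \<subseteq> S1" if "(ft_adj V E emb)\<^sup>*\<^sup>* g1 h" for h
    using that
  proof (induction rule: rtranclp_induct)
    case (step y z)
    show ?case
    proof (rule ccontr)
      assume "\<not> z \<subseteq> S1"
      moreover have "block_triangle V E emb e0 z"
        using block_triangle_rtranclp[OF g1(1)] step(1,2) by (meson rtranclp.rtrancl_into_rtrancl)
      ultimately have "z \<subseteq> S2" using one_side by blast
      obtain e where e: "e \<in> tri_edges E emb y" "e \<in> tri_edges E emb z"
        using step(2) unfolding ft_adj_def by blast
      obtain x where x: "x \<in> path_image (emb e)" "x \<notin> V"
        using plane_graph_edge_inner_point[OF G] e(1) by (auto simp: tri_edges_def)
      have "x \<in> closure S1 \<inter> closure S2"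
        using in_closure[of x y S1] in_closure[of x z S2] x e step.IH \<open>z \<subseteq> S2\<close>
        by (auto simp: tri_edges_def)
      moreover have "y \<noteq> z"
        using \<open>z \<subseteq> S2\<close> step.IH S(3) face_nonempty[OF G order_refl order_refl face]
          \<open>block_triangle V E emb e0 z\<close> by blast
      ultimately show False
        using no_crossing step(2) e x unfolding ft_adj_def by blast
    qed
  qed (fact \<open>g1 \<subseteq> S1\<close>)
  then have "g2 \<subseteq> S1 \<inter> S2"
    using \<open>g2 \<subseteq> S2\<close> block_triangles_linked[OF g1(1) g2(1)] by blast
  then show False using S(3) face_nonempty[OF G order_refl order_refl face[OF g2(1)]] by blast
qed

lemma block_theta_crossing:
  assumes G: "plane_graph V E emb" and "VB \<subseteq> V" "EB \<subseteq> E"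
    and B: "drawing emb VB EB = (\<Union>g\<in>Collect (block_triangle V E emb e0). frontier g)"
    and Out: "Out \<in> faces emb VB EB" "\<not> bounded Out" "Out \<notin> faces emb V E"
    and arcs: "arc c1" "arc c2" "arc c"
    and ends: "pathstart c1 = a" "pathfinish c1 = b" "pathstart c2 = a" "pathfinish c2 = b"
      "pathstart c = a" "pathfinish c = b"
    and cycle: "path_image c1 \<union> path_image c2 = frontier Out"
    and chord: "path_image c \<subseteq> drawing emb VB EB"
    and meet: "path_image c1 \<inter> path_image c2 = {a, b}" "path_image c1 \<inter> path_image c = {a, b}"
      "path_image c2 \<inter> path_image c = {a, b}"
  shows "\<exists>e f1 f2. f1 \<noteq> f2 \<and> facial_triangle V E emb f1 \<and> facial_triangle V E emb f2
    \<and> e \<in> tri_edges E emb f1 \<and> e \<in> tri_edges E emb f2 \<and> (\<exists>x \<in> path_image (emb e) - V. x \<in> path_image c)"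
proof -
  have bounded: "bounded (frontier Out)"
    using arcs(1,2) cycle[symmetric] by (simp add: arc_imp_path bounded_path_image)
  have frontier_B: "frontier Out \<subseteq> drawing emb VB EB"
    using frontier_of_components_closed_complement closed_drawing[OF G assms(2,3)] Out(1)
    by (auto simp: faces_def)
  have "path_image c \<inter> inside (frontier Out) \<noteq> {}"
  proof -
    obtain x where x: "x \<in> path_image c" "x \<noteq> pathstart c" "x \<noteq> pathfinish c"
      by (rule arc_inner_point[OF arcs(3)])
    then have "x \<notin> frontier Out" using cycle meet(2,3) ends(5,6) by blast
    then show ?thesis using drawing_subset_inside_hole[OF Out(1,2) bounded] x(1) chord by blast
  qed
  then obtain S1 S2 where S: "open S1" "open S2" "S1 \<inter> S2 = {}"
      "S1 \<union> S2 = inside (frontier Out) - path_image c"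
      "closure S1 \<inter> closure S2 \<subseteq> path_image c"
      "closure S1 \<inter> path_image c2 \<subseteq> path_image c" "closure S2 \<inter> path_image c1 \<subseteq> path_image c"
    by (rule theta_curve_sides[OF arcs ends meet, unfolded cycle])
  have sides: "g \<subseteq> S1 \<union> S2" if "block_triangle V E emb e0 g" for g
    using block_triangle_inside_hole[OF G assms(2,3) B Out bounded that] chord S(4) by blast
  have on_block_triangle: "\<exists>g. block_triangle V E emb e0 g \<and> x \<in> frontier g"
    if "x \<in> frontier Out" for x
    using that frontier_B B by blast
  obtain x1 where x1: "x1 \<in> path_image c1" "x1 \<noteq> pathstart c1" "x1 \<noteq> pathfinish c1"
    by (rule arc_inner_point[OF arcs(1)])
  then obtain g1 where g1: "block_triangle V E emb e0 g1" "x1 \<in> frontier g1" "x1 \<notin> closure S2"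
    using on_block_triangle[of x1] cycle S(7) meet(2) ends(1,2) by blast
  obtain x2 where x2: "x2 \<in> path_image c2" "x2 \<noteq> pathstart c2" "x2 \<noteq> pathfinish c2"
    by (rule arc_inner_point[OF arcs(2)])
  then obtain g2 where g2: "block_triangle V E emb e0 g2" "x2 \<in> frontier g2" "x2 \<notin> closure S1"
    using on_block_triangle[of x2] cycle S(6) meet(3) ends(3,4) by blast
  show ?thesis
    using block_triangles_cross[OF G S(1-3) sides g1 g2] S(5) by blast
qed

theorem lemma2p3:
  fixes V :: "complex set" and E :: "complex set set" and emb :: "complex set \<Rightarrow> real \<Rightarrow> complex"
    and VB :: "complex set" and EB :: "complex set set" and Out :: "complex set"
    and cs :: "complex list" and ps :: "complex list"
  assumes "plane_graph V E emb"
    and "two_connected V E"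
    and "triangular_block V E emb VB EB"
    and "Out \<in> faces emb VB EB" and "\<not> bounded Out"
    and "Out \<notin> faces emb V E"
    and "is_cycle EB cs" and "set cs \<subseteq> VB"
    and "drawing emb (set cs) (cyc_edges cs) = frontier Out"
    and "is_H_path EB (set cs) (cyc_edges cs) ps"
  shows "\<exists>e\<in>path_edges ps. \<exists>f1 f2. f1 \<noteq> f2 \<and> facial_triangle V E emb f1 \<and> facial_triangle V E emb f2
            \<and> e \<in> tri_edges E emb f1 \<and> e \<in> tri_edges E emb f2"
proof -
  note G = assms(1)
  obtain e e' where "e \<in> EB" "e' \<in> EB" "e \<noteq> e'" by (rule is_cycle_two_edges[OF assms(7)])
  then obtain e0 where EB: "EB = (\<Union>g\<in>Collect (block_triangle V E emb e0). tri_edges E emb g)" "VB = \<Union>EB"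
    by (rule triangular_block_triangles[OF assms(3)])
  have sub: "VB \<subseteq> V" "EB \<subseteq> E"
    using EB plane_graph_edge_subset[OF G] by (auto simp: tri_edges_def)
  have ps: "path_edges ps \<subseteq> EB" "2 \<le> length ps" using assms(10) by (auto simp: is_H_path_def is_path_def)
  have "is_cycle E cs" "is_H_path E (set cs) (cyc_edges cs) ps"
    using assms(7,10) sub(2) by (auto simp: is_cycle_def is_H_path_def is_path_def)
  then obtain c1 c2 c where arcs: "arc c1" "arc c2" "arc c"
      and ends: "pathstart c1 = hd ps" "pathfinish c1 = last ps" "pathstart c2 = hd ps"
        "pathfinish c2 = last ps" "pathstart c = hd ps" "pathfinish c = last ps"
      and cycle: "path_image c1 \<union> path_image c2 = drawing emb (set cs) (cyc_edges cs)"
      and c: "path_image c = drawing emb (set ps) (path_edges ps)"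
      and meet: "path_image c1 \<inter> path_image c2 = {hd ps, last ps}"
        "path_image c1 \<inter> path_image c = {hd ps, last ps}" "path_image c2 \<inter> path_image c = {hd ps, last ps}"
    by (rule cycle_H_path_theta[OF G])
  have "path_image c \<subseteq> drawing emb VB EB"
    unfolding c using set_subset_Union_path_edges[OF ps(2)] ps(1) EB(2) by (intro drawing_mono) blast+
  then obtain e f1 f2 x where "f1 \<noteq> f2" "facial_triangle V E emb f1" "facial_triangle V E emb f2"
      and e: "e \<in> tri_edges E emb f1" "e \<in> tri_edges E emb f2"
      and x: "x \<in> path_image (emb e)" "x \<notin> V" "x \<in> path_image c"
    using block_theta_crossing[OF G sub drawing_triangular_block[OF G EB] assms(4-6) arcs ends
        cycle[unfolded assms(9)] _ meet]
    by blast
  moreover have "e \<in> path_edges ps"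
    using edge_in_drawing[OF G vertex_path_set_subset[OF G ps(2)] _ _ x(1,2) x(3)[unfolded c]] ps(1) sub(2) e(1)
    by (auto simp: tri_edges_def)
  ultimately show ?thesis by blast
qed

end
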